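(* Let $A$ be a reduced commutative $\mathbb{N}$-graded ring and let $I=A_{\ge d}$ for some positive integer $d$. Then $I$ is an integrally closed ideal of $A$.
   Context: For an $\mathbb{N}$-graded ring $A$ and a positive integer $m$, $A_{\ge m}=\bigoplus_{j\ge m}A_j$. *)

theory Defs
  imports Main
begin

definition nat_graded :: "(nat \<Rightarrow> 'a::comm_ring_1 set) \<Rightarrow> bool" where
  "nat_graded G \<longleftrightarrow>
     (\<forall>n. 0 \<in> G n \<and> (\<forall>x\<in>G n. \<forall>y\<in>G n. x + y \<in> G n) \<and> (\<forall>x\<in>G n. - x \<in> G n)) \<and>
     (\<forall>m n. \<forall>x\<in>G m. \<forall>y\<in>G n. x * y \<in> G (m + n)) \<and>
     (\<forall>x. \<exists>!f. (\<forall>n. f n \<in> G n) \<and> finite {n. f n \<noteq> 0} \<and> x = (\<Sum>n\<in>{n. f n \<noteq> 0}. f n))"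

definition graded_comp :: "(nat \<Rightarrow> 'a::comm_ring_1 set) \<Rightarrow> 'a \<Rightarrow> nat \<Rightarrow> 'a" where
  "graded_comp G x = (THE f. (\<forall>n. f n \<in> G n) \<and> finite {n. f n \<noteq> 0} \<and> x = (\<Sum>n\<in>{n. f n \<noteq> 0}. f n))"

definition graded_ge :: "(nat \<Rightarrow> 'a::comm_ring_1 set) \<Rightarrow> nat \<Rightarrow> 'a set" where
  "graded_ge G m = {x. \<forall>n<m. graded_comp G x n = 0}"

definition reduced_ring :: "'a::comm_ring_1 itself \<Rightarrow> bool" where
  "reduced_ring _ \<longleftrightarrow> (\<forall>(x::'a) n. x ^ n = 0 \<longrightarrow> x = 0)"

definition is_ideal :: "'a::comm_ring_1 set \<Rightarrow> bool" where
  "is_ideal I \<longleftrightarrow> 0 \<in> I \<and> (\<forall>x\<in>I. \<forall>y\<in>I. x + y \<in> I) \<and> (\<forall>x\<in>I. \<forall>r. r * x \<in> I)"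

fun ideal_pow :: "'a::comm_ring_1 set \<Rightarrow> nat \<Rightarrow> 'a set" where
  "ideal_pow I 0 = UNIV"
| "ideal_pow I (Suc k) =
     {s. \<exists>(m::nat) (a::nat \<Rightarrow> 'a) (b::nat \<Rightarrow> 'a). (\<forall>j<m. a j \<in> I \<and> b j \<in> ideal_pow I k) \<and> s = (\<Sum>j<m. a j * b j)}"

definition integral_over_ideal :: "'a::comm_ring_1 set \<Rightarrow> 'a \<Rightarrow> bool" where
  "integral_over_ideal I x \<longleftrightarrow>
     (\<exists>n a. n \<ge> 1 \<and> (\<forall>i\<in>{1..n}. a i \<in> ideal_pow I i) \<and>
            x ^ n + (\<Sum>i=1..n. a i * x ^ (n - i)) = 0)"

definition integrally_closed_ideal :: "'a::comm_ring_1 set \<Rightarrow> bool" where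
  "integrally_closed_ideal I \<longleftrightarrow> is_ideal I \<and> (\<forall>x. integral_over_ideal I x \<longrightarrow> x \<in> I)"

end

theory Submission
  imports Defs
begin

text \<open>Suppose \<open>x^n + a_1 x^(n-1) + ... + a_n = 0\<close> with \<open>a_i \<in> I^i\<close>, so that \<open>a_i\<close> lives in
  degrees \<open>\<ge> i d\<close>, and suppose \<open>x \<notin> I\<close>: its lowest nonzero homogeneous component \<open>x_k\<close> has
  degree \<open>k < d\<close>. In degree \<open>n k\<close>, the term \<open>x^n\<close> contributes \<open>x_k^n\<close>, while \<open>a_i x^(n-i)\<close>
  lives in degrees \<open>\<ge> i d + (n - i) k > n k\<close> and contributes nothing. Hence \<open>x_k^n = 0\<close>, and
  since \<open>A\<close> is reduced, \<open>x_k = 0\<close>, a contradiction.\<close>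

locale graded_ring =
  fixes G :: "nat \<Rightarrow> 'a::comm_ring_1 set"
  assumes nat_graded: "nat_graded G"
begin

abbreviation comp :: "'a \<Rightarrow> nat \<Rightarrow> 'a" where
  "comp \<equiv> graded_comp G"

lemma homogeneous_zero: "0 \<in> G n"
  using nat_graded unfolding nat_graded_def by blast

lemma homogeneous_add: "x \<in> G n \<Longrightarrow> y \<in> G n \<Longrightarrow> x + y \<in> G n"
  using nat_graded unfolding nat_graded_def by blast

lemma homogeneous_mult: "x \<in> G m \<Longrightarrow> y \<in> G n \<Longrightarrow> x * y \<in> G (m + n)"
  using nat_graded unfolding nat_graded_def by blast

lemma homogeneous_decomposition_unique:
  "\<exists>!f. (\<forall>n. f n \<in> G n) \<and> finite {n. f n \<noteq> 0} \<and> x = (\<Sum>n\<in>{n. f n \<noteq> 0}. f n)"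
  using nat_graded unfolding nat_graded_def by blast

lemma comp_decomposition:
  "(\<forall>n. comp x n \<in> G n) \<and> finite {n. comp x n \<noteq> 0} \<and> x = (\<Sum>n\<in>{n. comp x n \<noteq> 0}. comp x n)"
  unfolding graded_comp_def by (rule theI'[OF homogeneous_decomposition_unique])

lemma comp_homogeneous: "comp x n \<in> G n"
  using comp_decomposition by blast

lemma comp_eventually_zero: "\<exists>N. \<forall>n\<ge>N. comp x n = 0"
proof -
  have "finite {n. comp x n \<noteq> 0}"
    using comp_decomposition by blast
  then obtain N where "\<forall>n\<in>{n. comp x n \<noteq> 0}. n < N"
    using finite_nat_set_iff_bounded by blast
  then show ?thesis
    by (metis leD mem_Collect_eq)
qed

lemma sum_comp_lessThan:
  assumes "\<And>n. n \<ge> N \<Longrightarrow> comp x n = 0"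
  shows "x = (\<Sum>n<N. comp x n)"
proof -
  have "x = (\<Sum>n\<in>{n. comp x n \<noteq> 0}. comp x n)"
    using comp_decomposition by blast
  also have "\<dots> = (\<Sum>n<N. comp x n)"
    by (rule sum.mono_neutral_left) (use assms leI in auto)
  finally show ?thesis .
qed

lemma comp_unique:
  assumes "\<And>n. f n \<in> G n" and "\<And>n. n \<ge> N \<Longrightarrow> f n = 0" and "x = (\<Sum>n<N. f n)"
  shows "comp x = f"
proof -
  have supp: "{n. f n \<noteq> 0} \<subseteq> {..<N}"
    using assms(2) not_less by blast
  then have "(\<Sum>n\<in>{n. f n \<noteq> 0}. f n) = (\<Sum>n<N. f n)"
    by (intro sum.mono_neutral_left) auto
  moreover have "finite {n. f n \<noteq> 0}"
    using supp finite_subset by blast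
  ultimately show ?thesis
    unfolding graded_comp_def
    by (intro the1_equality[OF homogeneous_decomposition_unique]) (use assms in auto)
qed

lemma comp_of_homogeneous:
  assumes "h \<in> G m"
  shows "comp h n = (if n = m then h else 0)"
proof -
  have "comp h = (\<lambda>n. if n = m then h else 0)"
    by (rule comp_unique[where N = "Suc m"]) (auto simp: homogeneous_zero assms)
  then show ?thesis by simp
qed

lemma comp_zero [simp]: "comp 0 n = 0"
  using comp_of_homogeneous[OF homogeneous_zero[of 0]] by simp

lemma comp_add: "comp (x + y) n = comp x n + comp y n"
proof -
  obtain N1 where N1: "\<forall>n\<ge>N1. comp x n = 0"
    using comp_eventually_zero by blast
  obtain N2 where N2: "\<forall>n\<ge>N2. comp y n = 0"
    using comp_eventually_zero by blast
  define N where "N = max N1 N2"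
  have "x = (\<Sum>n<N. comp x n)" "y = (\<Sum>n<N. comp y n)"
    by (rule sum_comp_lessThan; use N1 N2 N_def in auto)+
  then have "comp (x + y) = (\<lambda>n. comp x n + comp y n)"
    by (intro comp_unique[where N = N])
      (use N1 N2 N_def in \<open>auto simp: homogeneous_add comp_homogeneous sum.distrib\<close>)
  then show ?thesis by simp
qed

lemma comp_sum: "finite A \<Longrightarrow> comp (\<Sum>i\<in>A. f i) n = (\<Sum>i\<in>A. comp (f i) n)"
  by (induction A rule: finite_induct) (auto simp: comp_add)

lemma comp_mult: "comp (x * y) n = (\<Sum>i\<le>n. comp x i * comp y (n - i))"
proof -
  obtain N1 where N1: "\<forall>n\<ge>N1. comp x n = 0"
    using comp_eventually_zero by blast
  obtain N2 where N2: "\<forall>n\<ge>N2. comp y n = 0"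
    using comp_eventually_zero by blast
  define N where "N = max (max N1 N2) (Suc n)"
  have "x = (\<Sum>i<N. comp x i)" "y = (\<Sum>j<N. comp y j)"
    by (rule sum_comp_lessThan; use N1 N2 N_def in auto)+
  then have "x * y = (\<Sum>i<N. \<Sum>j<N. comp x i * comp y j)"
    by (metis sum_product)
  then have "comp (x * y) n = (\<Sum>i<N. \<Sum>j<N. comp (comp x i * comp y j) n)"
    by (simp add: comp_sum)
  also have "\<dots> = (\<Sum>i<N. \<Sum>j<N. if j = n - i \<and> i \<le> n then comp x i * comp y j else 0)"
  proof (intro sum.cong refl)
    fix i j
    have "comp x i * comp y j \<in> G (i + j)"
      by (simp add: homogeneous_mult comp_homogeneous)
    then show "comp (comp x i * comp y j) n
        = (if j = n - i \<and> i \<le> n then comp x i * comp y j else 0)"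
      by (auto simp: comp_of_homogeneous)
  qed
  also have "\<dots> = (\<Sum>i<N. if i \<le> n then comp x i * comp y (n - i) else 0)"
    using N_def by (intro sum.cong refl) (auto simp: sum.delta')
  also have "\<dots> = (\<Sum>i\<le>n. comp x i * comp y (n - i))"
    using N_def by (simp add: sum.inter_filter[symmetric] lessThan_def atMost_def)
      (metis (no_types, lifting) Collect_cong le_imp_less_Suc less_max_iff_disj)
  finally show ?thesis .
qed

lemma comp_mult_graded_ge:
  assumes x: "x \<in> graded_ge G a" and y: "y \<in> graded_ge G b" and n: "n \<le> a + b"
  shows "comp (x * y) n = (if n = a + b then comp x a * comp y b else 0)"
proof -
  have "comp (x * y) n = (\<Sum>i\<le>n. if n = a + b \<and> i = a then comp x a * comp y b else 0)"
    unfolding comp_mult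
  proof (intro sum.cong refl)
    fix i assume "i \<in> {..n}"
    moreover have "comp x i = 0" if "i < a" using x that unfolding graded_ge_def by blast
    moreover have "comp y (n - i) = 0" if "n - i < b" using y that unfolding graded_ge_def by blast
    ultimately show "comp x i * comp y (n - i)
        = (if n = a + b \<and> i = a then comp x a * comp y b else 0)"
      using n by (cases "i < a \<or> n - i < b") auto
  qed
  also have "\<dots> = (if n = a + b then comp x a * comp y b else 0)"
    by (simp add: sum.delta')
  finally show ?thesis .
qed

lemma mult_mem_graded_ge:
  "x \<in> graded_ge G a \<Longrightarrow> y \<in> graded_ge G b \<Longrightarrow> x * y \<in> graded_ge G (a + b)"
  unfolding graded_ge_def[of G "a + b"] using comp_mult_graded_ge by auto

lemma graded_ge_antimono: "a \<le> b \<Longrightarrow> graded_ge G b \<subseteq> graded_ge G a"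
  unfolding graded_ge_def by auto

lemma graded_ge_0 [simp]: "graded_ge G 0 = UNIV"
  unfolding graded_ge_def by auto

lemma add_mem_graded_ge:
  "x \<in> graded_ge G k \<Longrightarrow> y \<in> graded_ge G k \<Longrightarrow> x + y \<in> graded_ge G k"
  unfolding graded_ge_def by (auto simp: comp_add)

lemma sum_mem_graded_ge: "(\<And>j. j \<in> A \<Longrightarrow> f j \<in> graded_ge G k) \<Longrightarrow> sum f A \<in> graded_ge G k"
  by (induction A rule: infinite_finite_induct)
    (auto simp: graded_ge_def comp_add)

lemma is_ideal_graded_ge: "is_ideal (graded_ge G k)"
proof -
  have "0 \<in> graded_ge G k"
    unfolding graded_ge_def by simp
  then show ?thesis
    unfolding is_ideal_def using add_mem_graded_ge mult_mem_graded_ge[of _ 0 _ k] by auto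
qed

lemma ideal_pow_graded_ge: "ideal_pow (graded_ge G d) i \<subseteq> graded_ge G (i * d)"
proof (induction i)
  case 0
  then show ?case by simp
next
  case (Suc i)
  show ?case
  proof
    fix s assume "s \<in> ideal_pow (graded_ge G d) (Suc i)"
    then obtain m a b where ab: "\<forall>j<(m::nat). a j \<in> graded_ge G d \<and> b j \<in> ideal_pow (graded_ge G d) i"
      and s: "s = (\<Sum>j<m. a j * b j)"
      by auto
    have "a j * b j \<in> graded_ge G (Suc i * d)" if "j < m" for j
      using mult_mem_graded_ge[of "a j" d "b j" "i * d"] ab that Suc.IH by auto
    then show "s \<in> graded_ge G (Suc i * d)"
      unfolding s by (intro sum_mem_graded_ge) auto
  qed
qed

lemma power_mem_graded_ge: "x \<in> graded_ge G k \<Longrightarrow> x ^ m \<in> graded_ge G (m * k)"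
  by (induction m) (auto dest: mult_mem_graded_ge)

lemma comp_power_graded_ge:
  assumes "x \<in> graded_ge G k"
  shows "comp (x ^ Suc m) (Suc m * k) = comp x k ^ Suc m"
proof (induction m)
  case (Suc m)
  then show ?case
    using comp_mult_graded_ge[OF assms power_mem_graded_ge[OF assms, of "Suc m"]] by simp
qed simp

lemma lowest_nonzero_comp:
  assumes "x \<notin> graded_ge G d"
  obtains k where "k < d" and "x \<in> graded_ge G k" and "comp x k \<noteq> 0"
proof -
  define k where "k = (LEAST k. comp x k \<noteq> 0)"
  have "\<exists>k. comp x k \<noteq> 0"
    using assms unfolding graded_ge_def by auto
  then have "comp x k \<noteq> 0"
    unfolding k_def by (rule LeastI_ex)
  moreover have "x \<in> graded_ge G k"
    unfolding graded_ge_def k_def using not_less_Least by blast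
  moreover have "k < d"
    using calculation(2) assms graded_ge_antimono[of d k] by (meson not_less subsetD)
  ultimately show thesis
    using that by blast
qed

lemma comp_integral_equation_term:
  assumes a: "a \<in> graded_ge G (i * d)" and x: "x \<in> graded_ge G k"
    and "k < d" and "1 \<le> i" and "i \<le> n"
  shows "comp (a * x ^ (n - i)) (n * k) = 0"
proof -
  have "n * k = i * k + (n - i) * k"
    using \<open>i \<le> n\<close> by (simp add: add_mult_distrib[symmetric])
  moreover have "i * k < i * d"
    using \<open>1 \<le> i\<close> \<open>k < d\<close> by simp
  ultimately show ?thesis
    using comp_mult_graded_ge[OF a power_mem_graded_ge[OF x], of "n * k"] by simp
qed

lemma integral_over_graded_ge_mem:
  assumes reduced: "reduced_ring TYPE('a)" and integral: "integral_over_ideal (graded_ge G d) x"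
  shows "x \<in> graded_ge G d"
proof (rule ccontr)
  assume x_notin: "x \<notin> graded_ge G d"
  obtain n a where "n \<ge> 1" and a: "\<forall>i\<in>{1..n}. a i \<in> ideal_pow (graded_ge G d) i"
    and equation: "x ^ n + (\<Sum>i=1..n. a i * x ^ (n - i)) = 0"
    using integral unfolding integral_over_ideal_def by blast
  then obtain m where n: "n = Suc m"
    using not0_implies_Suc by fastforce
  obtain k where "k < d" and x: "x \<in> graded_ge G k" and lowest: "comp x k \<noteq> 0"
    using lowest_nonzero_comp[OF x_notin] .
  have "(\<Sum>i=1..n. comp (a i * x ^ (n - i)) (n * k)) = 0"
    using comp_integral_equation_term[OF _ x \<open>k < d\<close>] a ideal_pow_graded_ge
    by (intro sum.neutral) (meson atLeastAtMost_iff subsetD)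
  moreover have "comp (x ^ n) (n * k) = comp x k ^ n"
    using comp_power_graded_ge[OF x, of m] unfolding n .
  ultimately have "comp (x ^ n + (\<Sum>i=1..n. a i * x ^ (n - i))) (n * k) = comp x k ^ n"
    by (simp only: comp_add comp_sum finite_atLeastAtMost add_0_right)
  then have "comp x k ^ n = 0"
    using equation by simp
  then show False
    using lowest reduced unfolding reduced_ring_def by blast
qed

end

theorem lemma3p6:
  fixes G :: "nat \<Rightarrow> 'a::comm_ring_1 set" and d :: nat
  assumes "nat_graded G"
    and "reduced_ring TYPE('a)"
    and "d > 0"
  shows "integrally_closed_ideal (graded_ge G d)"
proof -
  interpret graded_ring G
    using assms(1) by unfold_locales
  show ?thesis
    unfolding integrally_closed_ideal_def
    using is_ideal_graded_ge integral_over_graded_ge_mem[OF assms(2)] by blast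
qed

end
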